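(* If $S$ is a finite GCD closed set of positive integers and every element of $S$ generates a double-chain set in $S$, then the LCM matrix $[S]$ is invertible.
   Context: All order notions are with respect to divisibility, with meet $\gcd$; $S$ is GCD closed if $\gcd(x,y)\in S$ for all $x,y\in S$. The LCM matrix $[S]$ of $S=\{x_1,\dots,x_n\}$ has $(i,j)$ entry $\mathrm{lcm}(x_i,x_j)$. $C_S(x)$ is the set of elements of $S$ covered by $x$ in $(S,\mid)$; $\mathrm{meetcl}(C)$ is the set of gcds of all nonempty finite subsets of $C$. An element $x\in S$ generates a double-chain set in $S$ if $\mathrm{meetcl}(C_S(x))\setminus C_S(x)$ is a union of two disjoint (possibly empty) chains under divisibility. *)

theory Defs
  imports Main "Jordan_Normal_Form.Matrix"
begin

definition gcd_closed :: "nat set \<Rightarrow> bool" where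
  "gcd_closed S \<longleftrightarrow> (\<forall>x\<in>S. \<forall>y\<in>S. gcd x y \<in> S)"

text \<open>LCM matrix of S, with S listed in increasing order (invertibility does not depend
  on the ordering).\<close>
definition lcm_matrix :: "nat set \<Rightarrow> real mat" where
  "lcm_matrix S = (let xs = sorted_list_of_set S in
     mat (length xs) (length xs) (\<lambda>(i,j). real (lcm (xs ! i) (xs ! j))))"

definition covered_set :: "nat set \<Rightarrow> nat \<Rightarrow> nat set" where
  "covered_set S x = {y \<in> S. y dvd x \<and> y \<noteq> x \<and>
     \<not> (\<exists>z\<in>S. y dvd z \<and> z dvd x \<and> z \<noteq> y \<and> z \<noteq> x)}"

definition meetcl :: "nat set \<Rightarrow> nat set" where
  "meetcl C = {Gcd F | F. F \<subseteq> C \<and> finite F \<and> F \<noteq> {}}"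

definition dvd_chain :: "nat set \<Rightarrow> bool" where
  "dvd_chain A \<longleftrightarrow> (\<forall>a\<in>A. \<forall>b\<in>A. a dvd b \<or> b dvd a)"

definition generates_double_chain :: "nat set \<Rightarrow> nat \<Rightarrow> bool" where
  "generates_double_chain S x \<longleftrightarrow>
     (\<exists>A B. dvd_chain A \<and> dvd_chain B \<and> A \<inter> B = {} \<and>
        meetcl (covered_set S x) - covered_set S x = A \<union> B)"

end

theory Submission
  imports Defs "Jordan_Normal_Form.Determinant"
begin

text \<open>Let \<open>g\<close> (\<open>mobius_recip\<close>) be the Moebius inverse of \<open>n \<mapsto> 1/n\<close>, so that
  \<open>1/n = \<Sum>\<^bsub>d | n\<^esub> g(d)\<close>, and let \<open>\<Psi>(x)\<close> (\<open>divisor_sum_avoiding x (covered_set S x)\<close>) be the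
  sum of \<open>g\<close> over the divisors of \<open>x\<close> that divide no element covered by \<open>x\<close>. In a GCD-closed set
  every divisor \<open>d\<close> of some \<open>y \<in> S\<close> is counted in \<open>\<Psi>(z)\<close> for exactly one \<open>z \<in> S\<close> dividing \<open>y\<close>,
  namely the least element of \<open>S\<close> divisible by \<open>d\<close>. Hence \<open>1/gcd(x\<^sub>i,x\<^sub>j)\<close> is the sum of \<open>\<Psi>(z)\<close>
  over the \<open>z \<in> S\<close> dividing \<open>gcd(x\<^sub>i,x\<^sub>j)\<close>, the reciprocal GCD matrix factors as \<open>E diag(\<Psi>) E\<^sup>T\<close>
  with \<open>E\<close> unitriangular, and \<open>det [S] = \<Prod>\<^bsub>x\<in>S\<^esub> x\<^sup>2 \<Psi>(x)\<close>.

  By inclusion-exclusion, \<open>\<Psi>(x) = 1/x\<close> if \<open>x\<close> covers nothing and \<open>\<Psi>(x) = 1/x - 1/c < 0\<close> if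
  it covers a single \<open>c\<close>. If the covered set \<open>C\<close> has at least two elements and some \<open>c \<in> C\<close> has a
  partner \<open>d\<^sub>0\<close> with \<open>gcd(c,d) | gcd(c,d\<^sub>0)\<close> for all \<open>d \<in> C - {c}\<close>, then removing \<open>c\<close> from \<open>C\<close>
  lowers the sum by \<open>1/gcd(c,d\<^sub>0) - 1/c > 0\<close>. The double-chain hypothesis implies that no three gcds
  of pairs from \<open>C\<close> are pairwise incomparable, which forces such a \<open>c\<close> to exist; descending to two
  incomparable elements, where \<open>1/c + 1/d \<le> 1/gcd(c,d)\<close>, shows \<open>\<Psi>(x) > 0\<close>.\<close>

section \<open>Divisor sums avoiding a set\<close>

function mobius_recip :: "nat \<Rightarrow> real" where
  "mobius_recip n =
     (if n = 0 then 0 else 1 / real n - (\<Sum>d | d dvd n \<and> d < n. mobius_recip d))"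
  by auto
termination by (relation "measure id") auto

declare mobius_recip.simps [simp del]

lemma sum_divisors_mobius_recip:
  assumes "n > 0"
  shows "(\<Sum>d | d dvd n. mobius_recip d) = 1 / real n"
proof -
  have "{d. d dvd n} = insert n {d. d dvd n \<and> d < n}"
    using assms by (auto dest: dvd_imp_le)
  moreover have "finite {d. d dvd n \<and> d < n}" by simp
  ultimately show ?thesis
    using assms by (simp add: mobius_recip.simps [of n])
qed

definition divisor_sum_avoiding :: "nat \<Rightarrow> nat set \<Rightarrow> real" where
  "divisor_sum_avoiding y C = (\<Sum>d | d dvd y \<and> (\<forall>c\<in>C. \<not> d dvd c). mobius_recip d)"

lemma divisor_sum_avoiding_empty: "y > 0 \<Longrightarrow> divisor_sum_avoiding y {} = 1 / real y"
  by (simp add: divisor_sum_avoiding_def sum_divisors_mobius_recip)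

lemma divisor_sum_avoiding_insert:
  assumes "y > 0"
  shows "divisor_sum_avoiding y (insert c C) =
           divisor_sum_avoiding y C - divisor_sum_avoiding (gcd y c) C"
proof -
  let ?A = "{d. d dvd y \<and> (\<forall>c\<in>C. \<not> d dvd c)}"
  let ?B = "{d. d dvd y \<and> (\<forall>c'\<in>insert c C. \<not> d dvd c')}"
  let ?G = "{d. d dvd gcd y c \<and> (\<forall>c\<in>C. \<not> d dvd c)}"
  have "finite ?A" using assms by (auto intro: finite_subset [of _ "{d. d dvd y}"])
  moreover have "?A = ?B \<union> ?G" "?B \<inter> ?G = {}" by auto
  ultimately have "sum mobius_recip ?A = sum mobius_recip ?B + sum mobius_recip ?G"
    by (simp add: sum.union_disjoint)
  thus ?thesis unfolding divisor_sum_avoiding_def by simp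
qed

lemma divisor_sum_avoiding_singleton:
  "y > 0 \<Longrightarrow> divisor_sum_avoiding y {c} = 1 / real y - 1 / real (gcd y c)"
  using divisor_sum_avoiding_insert [of y c "{}"] by (simp add: divisor_sum_avoiding_empty)

lemma divisor_sum_avoiding_dominated:
  assumes "d0 \<in> C" and "\<forall>d\<in>C. gcd y d dvd gcd y d0"
  shows "divisor_sum_avoiding y C = divisor_sum_avoiding y {d0}"
proof -
  have "d dvd c \<Longrightarrow> d dvd y \<Longrightarrow> c \<in> C \<Longrightarrow> d dvd d0" for d c
    using assms(2) by (metis dvd_trans gcd_dvd2 gcd_greatest)
  hence "{d. d dvd y \<and> (\<forall>c\<in>C. \<not> d dvd c)} = {d. d dvd y \<and> \<not> d dvd d0}"
    using assms(1) by blast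
  thus ?thesis by (simp add: divisor_sum_avoiding_def)
qed

lemma recip_add_le_recip_gcd:
  fixes c d :: nat
  assumes "c > 0" "d > 0" "\<not> c dvd d" "\<not> d dvd c"
  shows "1 / real c + 1 / real d \<le> 1 / real (gcd c d)"
proof -
  have half: "1 / real a \<le> 1 / (2 * real (gcd c d))" if "a > 0" "gcd c d dvd a" "a \<noteq> gcd c d" for a
  proof -
    obtain u where u: "a = gcd c d * u" using \<open>gcd c d dvd a\<close> by blast
    with that have "u \<noteq> 0" "u \<noteq> 1" by auto
    hence "u \<ge> 2" by linarith
    hence "2 * gcd c d \<le> a" using u by simp
    hence "2 * real (gcd c d) \<le> real a" by (metis of_nat_le_iff of_nat_mult of_nat_numeral)
    thus ?thesis using \<open>c > 0\<close> by (simp add: frac_le)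
  qed
  have "gcd c d \<noteq> c" "gcd c d \<noteq> d"
    using assms(3,4) by (metis gcd_dvd2, metis gcd_dvd1)
  hence "1 / real c \<le> 1 / (2 * real (gcd c d))" "1 / real d \<le> 1 / (2 * real (gcd c d))"
    using assms(1,2) by (auto intro: half)
  thus ?thesis by simp
qed

section \<open>Dominant partners and positivity\<close>

definition gcd_pairs :: "nat set \<Rightarrow> nat set" where
  "gcd_pairs C = {gcd a b | a b. a \<in> C \<and> b \<in> C \<and> a \<noteq> b}"

definition no_dvd_antichain3 :: "nat set \<Rightarrow> bool" where
  "no_dvd_antichain3 A \<longleftrightarrow>
     (\<forall>u\<in>A. \<forall>v\<in>A. \<forall>w\<in>A. u dvd v \<or> v dvd u \<or> u dvd w \<or> w dvd u \<or> v dvd w \<or> w dvd v)"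

lemma gcd_pairs_mono: "C' \<subseteq> C \<Longrightarrow> gcd_pairs C' \<subseteq> gcd_pairs C"
  unfolding gcd_pairs_def by blast

lemma finite_gcd_pairs:
  assumes "finite C"
  shows "finite (gcd_pairs C)"
proof (rule finite_subset)
  show "gcd_pairs C \<subseteq> (\<lambda>(a, b). gcd a b) ` (C \<times> C)"
    unfolding gcd_pairs_def by auto
  show "finite ((\<lambda>(a, b). gcd a b) ` (C \<times> C))" using assms by simp
qed

lemma no_dvd_antichain3_subset: "no_dvd_antichain3 A \<Longrightarrow> B \<subseteq> A \<Longrightarrow> no_dvd_antichain3 B"
  unfolding no_dvd_antichain3_def by blast

lemma no_dvd_antichain3_Un_chains:
  "dvd_chain A \<Longrightarrow> dvd_chain B \<Longrightarrow> no_dvd_antichain3 (A \<union> B)"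
  unfolding no_dvd_antichain3_def dvd_chain_def by blast

text \<open>Choosing a pair \<open>a \<noteq> b\<close> of maximal \<open>gcd a b\<close>, one of \<open>a\<close>, \<open>b\<close> has \<open>gcd\<close> with every
  other element of \<open>C\<close> dividing \<open>gcd a b\<close>; otherwise \<open>gcd a b\<close>, \<open>gcd a e\<close>, \<open>gcd b f\<close> would
  be pairwise incomparable.\<close>
lemma exists_dominant_partner:
  assumes "finite C" "0 \<notin> C" "no_dvd_antichain3 (gcd_pairs C)" "gcd_pairs C \<noteq> {}"
  shows "\<exists>c\<in>C. \<exists>d0\<in>C - {c}. \<forall>d\<in>C - {c}. gcd c d dvd gcd c d0"
proof -
  have "Max (gcd_pairs C) \<in> gcd_pairs C"
    using finite_gcd_pairs [OF assms(1)] assms(4) by (rule Max_in)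
  then obtain a b where ab: "a \<in> C" "b \<in> C" "a \<noteq> b" "gcd a b = Max (gcd_pairs C)"
    unfolding gcd_pairs_def by auto
  have maximal: "g = gcd a b" if "g \<in> gcd_pairs C" "gcd a b dvd g" for g
  proof -
    have "g > 0" using that(1) assms(2) unfolding gcd_pairs_def by auto
    with that(2) have "gcd a b \<le> g" by (rule dvd_imp_le)
    moreover have "g \<le> gcd a b"
      unfolding ab(4) using finite_gcd_pairs [OF assms(1)] that(1) by (rule Max_ge)
    ultimately show ?thesis by simp
  qed
  show ?thesis
  proof (rule ccontr)
    assume none: "\<not> ?thesis"
    have "\<not> (\<forall>d\<in>C - {a}. gcd a d dvd gcd a b)" "\<not> (\<forall>d\<in>C - {b}. gcd b d dvd gcd b a)"
      using none ab(1-3) by blast+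
    then obtain e f where e: "e \<in> C" "e \<noteq> a" "\<not> gcd a e dvd gcd a b"
      and f: "f \<in> C" "f \<noteq> b" "\<not> gcd b f dvd gcd a b"
      by (auto simp: gcd.commute [of b a])
    have in_pairs: "gcd a b \<in> gcd_pairs C" "gcd a e \<in> gcd_pairs C" "gcd b f \<in> gcd_pairs C"
      using ab e f unfolding gcd_pairs_def by blast+
    have "\<not> gcd a b dvd gcd a e" "\<not> gcd a b dvd gcd b f"
      using maximal [OF in_pairs(2)] maximal [OF in_pairs(3)] e(3) f(3) by auto
    moreover have "\<not> gcd a e dvd gcd b f"
    proof
      assume "gcd a e dvd gcd b f"
      hence "gcd a e dvd b" by (rule dvd_trans [OF _ gcd_dvd1])
      thus False using e(3) by simp
    qed
    moreover have "\<not> gcd b f dvd gcd a e"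
    proof
      assume "gcd b f dvd gcd a e"
      hence "gcd b f dvd a" by (rule dvd_trans [OF _ gcd_dvd1])
      thus False using f(3) by simp
    qed
    moreover note assms(3) [unfolded no_dvd_antichain3_def, rule_format, OF in_pairs]
    ultimately show False using e(3) f(3) by argo
  qed
qed

lemma divisor_sum_avoiding_remove_dominated:
  assumes "x > 0" "c \<in> C" "c dvd x" "d0 \<in> C - {c}" "\<forall>d\<in>C - {c}. gcd c d dvd gcd c d0"
  shows "divisor_sum_avoiding x C =
           divisor_sum_avoiding x (C - {c}) + (1 / real (gcd c d0) - 1 / real c)"
proof -
  have "c > 0" using assms(1,3) by (rule dvd_pos_nat)
  have "divisor_sum_avoiding c (C - {c}) = divisor_sum_avoiding c {d0}"
    using assms(4,5) by (rule divisor_sum_avoiding_dominated)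
  also have "\<dots> = 1 / real c - 1 / real (gcd c d0)"
    using \<open>c > 0\<close> by (rule divisor_sum_avoiding_singleton)
  moreover have "C = insert c (C - {c})" "gcd x c = c"
    using assms(2,3) by (auto simp: gcd_nat.absorb2)
  ultimately show ?thesis
    using divisor_sum_avoiding_insert [OF assms(1), of c "C - {c}"] by simp
qed

lemma divisor_sum_avoiding_pos:
  assumes "finite C" "x > 0" "\<forall>c\<in>C. c dvd x \<and> c \<noteq> x"
    and "\<forall>c\<in>C. \<forall>d\<in>C. c dvd d \<longrightarrow> c = d"
    and "no_dvd_antichain3 (gcd_pairs C)" "card C \<ge> 2"
  shows "divisor_sum_avoiding x C > 0"
  using assms
proof (induction "card C" arbitrary: C rule: less_induct)
  case less
  have pos: "0 \<notin> C" using less.prems(2,3) by auto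
  have "\<not> card C \<le> Suc 0" using less.prems(6) by simp
  then obtain a b where "a \<in> C" "b \<in> C" "a \<noteq> b"
    using card_le_Suc0_iff_eq [OF less.prems(1)] by blast
  hence "gcd_pairs C \<noteq> {}" unfolding gcd_pairs_def by blast
  then obtain c d0 where c: "c \<in> C" and d0: "d0 \<in> C - {c}"
    and dom: "\<forall>d\<in>C - {c}. gcd c d dvd gcd c d0"
    using exists_dominant_partner [OF less.prems(1) pos less.prems(5)] by blast
  have "c dvd x" using c less.prems(3) by blast
  have "\<not> c dvd d0" "\<not> d0 dvd c" using c d0 less.prems(4) by blast+
  have "c > 0" "d0 > 0"
    using c d0 pos by (metis gr0I, metis DiffD1 gr0I)
  have sum_eq: "divisor_sum_avoiding x C =
      divisor_sum_avoiding x (C - {c}) + (1 / real (gcd c d0) - 1 / real c)"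
    using divisor_sum_avoiding_remove_dominated [OF less.prems(2) c \<open>c dvd x\<close> d0 dom] .
  show ?case
  proof (cases "card C = 2")
    case True
    hence "card (C - {c}) = 1" using c less.prems(1) by simp
    hence "C - {c} = {d0}" using d0 by (metis card_1_singletonE singletonD)
    moreover have "gcd x d0 = d0"
      using d0 less.prems(3) by (simp add: gcd_nat.absorb2)
    ultimately have "divisor_sum_avoiding x (C - {c}) = 1 / real x - 1 / real d0"
      using divisor_sum_avoiding_singleton [OF less.prems(2)] by simp
    moreover have "1 / real c + 1 / real d0 \<le> 1 / real (gcd c d0)"
      using recip_add_le_recip_gcd \<open>c > 0\<close> \<open>d0 > 0\<close> \<open>\<not> c dvd d0\<close> \<open>\<not> d0 dvd c\<close> .
    moreover have "1 / real x > 0" using \<open>x > 0\<close> by simp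
    ultimately show ?thesis using sum_eq by linarith
  next
    case False
    have "gcd c d0 \<le> c" using \<open>c > 0\<close> by (rule dvd_imp_le [OF gcd_dvd1])
    moreover have "gcd c d0 \<noteq> c" using \<open>\<not> c dvd d0\<close> by (metis gcd_dvd2)
    ultimately have "gcd c d0 < c" by simp
    hence "1 / real (gcd c d0) - 1 / real c > 0"
      using \<open>c > 0\<close> by (simp add: frac_less2)
    moreover have "divisor_sum_avoiding x (C - {c}) > 0"
    proof (rule less.hyps)
      show "card (C - {c}) < card C" "card (C - {c}) \<ge> 2"
        using c False less.prems(1,6) by auto
      show "no_dvd_antichain3 (gcd_pairs (C - {c}))"
        by (rule no_dvd_antichain3_subset [OF less.prems(5) gcd_pairs_mono]) blast
      show "finite (C - {c})" using less.prems(1) by simp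
      show "\<forall>c'\<in>C - {c}. c' dvd x \<and> c' \<noteq> x" using less.prems(3) by blast
      show "\<forall>c'\<in>C - {c}. \<forall>d\<in>C - {c}. c' dvd d \<longrightarrow> c' = d" using less.prems(4) by blast
    qed (rule less.prems(2))
    ultimately show ?thesis using sum_eq by simp
  qed
qed

section \<open>Covered sets\<close>

lemma covered_set_dvd: "c \<in> covered_set S x \<Longrightarrow> c dvd x \<and> c \<noteq> x"
  unfolding covered_set_def by blast

lemma covered_set_antichain:
  assumes "c \<in> covered_set S x" "d \<in> covered_set S x" "c dvd d"
  shows "c = d"
  using assms unfolding covered_set_def by blast

lemma gcd_pairs_subset_meetcl:
  assumes "\<forall>c\<in>C. \<forall>d\<in>C. c dvd d \<longrightarrow> c = d"
  shows "gcd_pairs C \<subseteq> meetcl C - C"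
proof
  fix g assume "g \<in> gcd_pairs C"
  then obtain a b where ab: "a \<in> C" "b \<in> C" "a \<noteq> b" "g = gcd a b"
    unfolding gcd_pairs_def by blast
  have "g = Gcd {a, b}" using ab(4) by simp
  hence "g \<in> meetcl C" unfolding meetcl_def using ab(1,2) by blast
  moreover have "g \<notin> C"
  proof
    assume "g \<in> C"
    moreover have "g dvd a" "g dvd b" using ab(4) by simp_all
    ultimately show False using assms ab(1-3) by metis
  qed
  ultimately show "g \<in> meetcl C - C" by blast
qed

lemma no_dvd_antichain3_gcd_pairs_covered_set:
  assumes "generates_double_chain S x"
  shows "no_dvd_antichain3 (gcd_pairs (covered_set S x))"
proof -
  obtain A B where "dvd_chain A" "dvd_chain B"
    and AB: "meetcl (covered_set S x) - covered_set S x = A \<union> B"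
    using assms unfolding generates_double_chain_def by blast
  hence "no_dvd_antichain3 (meetcl (covered_set S x) - covered_set S x)"
    by (simp add: no_dvd_antichain3_Un_chains)
  moreover have "gcd_pairs (covered_set S x) \<subseteq> meetcl (covered_set S x) - covered_set S x"
    by (rule gcd_pairs_subset_meetcl) (blast intro: covered_set_antichain)
  ultimately show ?thesis by (rule no_dvd_antichain3_subset)
qed

lemma divisor_sum_avoiding_covered_set_nonzero:
  assumes "finite S" "x > 0" "generates_double_chain S x"
  shows "divisor_sum_avoiding x (covered_set S x) \<noteq> 0"
proof -
  let ?C = "covered_set S x"
  have "finite ?C" using assms(1) unfolding covered_set_def by simp
  consider "card ?C = 0" | "card ?C = 1" | "card ?C \<ge> 2" by linarith
  thus ?thesis
  proof cases
    case 1
    hence "?C = {}" using \<open>finite ?C\<close> by simp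
    thus ?thesis using assms(2) by (simp add: divisor_sum_avoiding_empty)
  next
    case 2
    then obtain c where C: "?C = {c}" by (rule card_1_singletonE)
    hence "c dvd x" "c \<noteq> x" using covered_set_dvd by blast+
    hence "c < x" "c > 0"
      using dvd_imp_le [OF \<open>c dvd x\<close> assms(2)] dvd_pos_nat [OF assms(2) \<open>c dvd x\<close>] by simp_all
    moreover have "gcd x c = c" using \<open>c dvd x\<close> by (simp add: gcd_nat.absorb2)
    ultimately show ?thesis
      using C divisor_sum_avoiding_singleton [OF assms(2)] by (simp add: frac_less2)
  next
    case 3
    have "\<forall>c\<in>?C. c dvd x \<and> c \<noteq> x" "\<forall>c\<in>?C. \<forall>d\<in>?C. c dvd d \<longrightarrow> c = d"
      using covered_set_dvd covered_set_antichain by blast+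
    from divisor_sum_avoiding_pos [OF \<open>finite ?C\<close> assms(2) this
        no_dvd_antichain3_gcd_pairs_covered_set [OF assms(3)] 3]
    show ?thesis by simp
  qed
qed

lemma exists_covered_set_above:
  assumes "finite S" "w \<in> S" "z > 0" "w dvd z" "w \<noteq> z"
  shows "\<exists>c\<in>covered_set S z. w dvd c"
proof -
  let ?U = "{u \<in> S. w dvd u \<and> u dvd z \<and> u \<noteq> z}"
  have "finite ?U" "w \<in> ?U" using assms by auto
  hence "Max ?U \<in> ?U" by (intro Max_in) auto
  moreover have "Max ?U \<in> covered_set S z"
    unfolding covered_set_def
  proof safe
    show "Max ?U \<in> S" "Max ?U dvd z" "Max ?U = z \<Longrightarrow> False" using \<open>Max ?U \<in> ?U\<close> by auto
    fix u assume u: "u \<in> S" "Max ?U dvd u" "u dvd z" "u \<noteq> Max ?U" "u \<noteq> z"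
    have "u \<in> ?U" using \<open>Max ?U \<in> ?U\<close> u dvd_trans [OF _ u(2), of w] by blast
    hence "u \<le> Max ?U" using \<open>finite ?U\<close> by simp
    moreover have "Max ?U \<le> u" using dvd_imp_le [OF u(2) dvd_pos_nat [OF assms(3) u(3)]] .
    ultimately show False using u(4) by simp
  qed
  ultimately show ?thesis by blast
qed

lemma avoiding_owner_unique:
  assumes "finite S" "\<forall>x\<in>S. x > 0" "gcd_closed S" "z1 \<in> S" "z2 \<in> S" "d dvd z1" "d dvd z2"
    and "\<forall>c\<in>covered_set S z1. \<not> d dvd c" "\<forall>c\<in>covered_set S z2. \<not> d dvd c"
  shows "z1 = z2"
proof -
  have gcd_eq: "gcd z z' = z"
    if "z \<in> S" "z' \<in> S" "d dvd z" "d dvd z'" "\<forall>c\<in>covered_set S z. \<not> d dvd c" for z z'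
  proof (rule ccontr)
    assume "gcd z z' \<noteq> z"
    moreover have "gcd z z' \<in> S" using assms(3) that(1,2) unfolding gcd_closed_def by blast
    moreover have "z > 0" using assms(2) that(1) by blast
    ultimately obtain c where "c \<in> covered_set S z" "gcd z z' dvd c"
      using exists_covered_set_above [OF assms(1) _ _ gcd_dvd1] by blast
    moreover have "d dvd gcd z z'" using that(3,4) by simp
    ultimately show False using that(5) dvd_trans [of d "gcd z z'"] by blast
  qed
  show ?thesis
    using gcd_eq [OF assms(4,5,6,7,8)] gcd_eq [OF assms(5,4,7,6,9)] by (simp add: gcd.commute)
qed

lemma avoiding_owner_exists:
  assumes "finite S" "\<forall>x\<in>S. x > 0" "y \<in> S" "d dvd y"
  shows "\<exists>z\<in>S. z dvd y \<and> d dvd z \<and> (\<forall>c\<in>covered_set S z. \<not> d dvd c)"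
proof -
  let ?T = "{z \<in> S. d dvd z \<and> z dvd y}"
  have "finite ?T" "y \<in> ?T" using assms by auto
  hence "Min ?T \<in> ?T" by (intro Min_in) auto
  moreover have "\<not> d dvd c" if "c \<in> covered_set S (Min ?T)" for c
  proof
    assume "d dvd c"
    have "c \<in> S" "c dvd Min ?T" "c \<noteq> Min ?T"
      using that unfolding covered_set_def by auto
    hence "c \<in> ?T" using \<open>Min ?T \<in> ?T\<close> \<open>d dvd c\<close> dvd_trans [OF \<open>c dvd Min ?T\<close>, of y] by blast
    hence "Min ?T \<le> c" using \<open>finite ?T\<close> by simp
    moreover have "Min ?T > 0" using \<open>Min ?T \<in> ?T\<close> assms(2) by blast
    hence "c \<le> Min ?T" using \<open>c dvd Min ?T\<close> by (simp add: dvd_imp_le)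
    ultimately show False using \<open>c \<noteq> Min ?T\<close> by simp
  qed
  ultimately show ?thesis by blast
qed

lemma sum_divisor_sum_avoiding_covered_set:
  assumes "finite S" "\<forall>x\<in>S. x > 0" "gcd_closed S" "y \<in> S"
  shows "(\<Sum>z | z \<in> S \<and> z dvd y. divisor_sum_avoiding z (covered_set S z)) = 1 / real y"
proof -
  define owns where "owns z d \<longleftrightarrow> d dvd z \<and> (\<forall>c\<in>covered_set S z. \<not> d dvd c)" for z d
  have "y > 0" using assms(2,4) by blast
  have unique_owner:
    "(\<Sum>z\<in>{z. z \<in> {z \<in> S. z dvd y} \<and> owns z d}. mobius_recip d) = mobius_recip d"
    if dy: "d dvd y" for d
  proof -
    obtain z0 where z0: "z0 \<in> S" "z0 dvd y" "owns z0 d"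
      using avoiding_owner_exists [OF assms(1,2,4) dy] unfolding owns_def by blast
    have "z = z0" if "z \<in> S" "owns z d" for z
      using avoiding_owner_unique [OF assms(1-3) that(1) z0(1)] that(2) z0(3)
      unfolding owns_def by blast
    hence "{z. z \<in> {z \<in> S. z dvd y} \<and> owns z d} = {z0}" using z0 by blast
    thus ?thesis by simp
  qed
  have owned_divisors: "{d. owns z d} = {d. d \<in> {d. d dvd y} \<and> owns z d}" if "z dvd y" for z
    unfolding owns_def using dvd_trans [OF _ that] by blast
  have "(\<Sum>z | z \<in> S \<and> z dvd y. divisor_sum_avoiding z (covered_set S z))
      = (\<Sum>z\<in>{z \<in> S. z dvd y}. \<Sum>d\<in>{d. d \<in> {d. d dvd y} \<and> owns z d}. mobius_recip d)"
    unfolding divisor_sum_avoiding_def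
    by (intro sum.cong refl) (simp add: owns_def [symmetric] owned_divisors)
  also have "\<dots> = (\<Sum>d\<in>{d. d dvd y}. \<Sum>z\<in>{z. z \<in> {z \<in> S. z dvd y} \<and> owns z d}. mobius_recip d)"
    using assms(1) \<open>y > 0\<close> by (intro sum.swap_restrict) auto
  also have "\<dots> = (\<Sum>d | d dvd y. mobius_recip d)"
    by (rule sum.cong [OF refl], rule unique_owner) simp
  also have "\<dots> = 1 / real y" using \<open>y > 0\<close> by (rule sum_divisors_mobius_recip)
  finally show ?thesis .
qed

section \<open>Factorization of the LCM matrix\<close>

definition divisor_mat :: "nat list \<Rightarrow> (nat \<Rightarrow> real) \<Rightarrow> real mat" where
  "divisor_mat xs f =
     mat (length xs) (length xs) (\<lambda>(i, k). if xs ! k dvd xs ! i then f (xs ! k) else 0)"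

lemma divisor_mat_carrier: "divisor_mat xs f \<in> carrier_mat (length xs) (length xs)"
  by (simp add: divisor_mat_def)

lemma det_divisor_mat:
  assumes "sorted_wrt (<) xs" "0 \<notin> set xs"
  shows "det (divisor_mat xs f) = (\<Prod>x\<leftarrow>xs. f x)"
proof -
  have "\<not> xs ! j dvd xs ! i" if "i < j" "j < length xs" for i j
  proof
    assume "xs ! j dvd xs ! i"
    moreover have "xs ! i > 0" using assms(2) that by (metis gr0I nth_mem order.strict_trans)
    ultimately have "xs ! j \<le> xs ! i" by (rule dvd_imp_le)
    moreover have "xs ! i < xs ! j" using assms(1) that by (simp add: sorted_wrt_iff_nth_less)
    ultimately show False by simp
  qed
  hence "det (divisor_mat xs f) = prod_list (diag_mat (divisor_mat xs f))"
    by (intro det_lower_triangular [OF _ divisor_mat_carrier]) (simp add: divisor_mat_def)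
  also have "diag_mat (divisor_mat xs f) = map f xs"
    by (simp add: diag_mat_def divisor_mat_def map_equality_iff)
  finally show ?thesis .
qed

lemma divisor_mat_mult_transpose:
  assumes "distinct xs" "i < length xs" "j < length xs"
  shows "(divisor_mat xs f * transpose_mat (divisor_mat xs g)) $$ (i, j) =
           (\<Sum>z | z \<in> set xs \<and> z dvd gcd (xs ! i) (xs ! j). f z * g z)"
proof -
  let ?h = "\<lambda>z. if z dvd gcd (xs ! i) (xs ! j) then f z * g z else 0"
  have "(divisor_mat xs f * transpose_mat (divisor_mat xs g)) $$ (i, j) =
          (\<Sum>k = 0..<length xs. ?h (xs ! k))"
    using assms(2,3) by (auto simp: divisor_mat_def scalar_prod_def intro: sum.cong)
  also have "\<dots> = (\<Sum>z\<in>set xs. ?h z)"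
    using sum.reindex_bij_betw [OF bij_betw_nth [OF assms(1) refl refl], of ?h]
    by (simp add: lessThan_atLeast0)
  also have "\<dots> = (\<Sum>z | z \<in> set xs \<and> z dvd gcd (xs ! i) (xs ! j). f z * g z)"
    by (simp add: sum.inter_filter)
  finally show ?thesis .
qed

lemma det_mat_diag_nth: "det (mat_diag (length xs) (\<lambda>i. f (xs ! i))) = (\<Prod>x\<leftarrow>xs. f x)"
proof -
  have "det (mat_diag (length xs) (\<lambda>i. f (xs ! i))) =
          prod_list (diag_mat (mat_diag (length xs) (\<lambda>i. f (xs ! i))))"
    by (rule det_lower_triangular [of "length xs"]) (auto simp: mat_diag_def)
  also have "diag_mat (mat_diag (length xs) (\<lambda>i. f (xs ! i))) = map f xs"
    by (simp add: diag_mat_def mat_diag_def map_equality_iff)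
  finally show ?thesis .
qed

lemma lcm_matrix_factorization:
  assumes "finite S" "\<forall>x\<in>S. x > 0" "gcd_closed S"
  defines "xs \<equiv> sorted_list_of_set S"
  defines "D \<equiv> mat_diag (length xs) (\<lambda>i. real (xs ! i))"
  shows "lcm_matrix S =
           D * (divisor_mat xs (\<lambda>z. divisor_sum_avoiding z (covered_set S z))
                 * transpose_mat (divisor_mat xs (\<lambda>_. 1))) * D"
    (is "_ = D * ?K * D")
proof -
  let ?n = "length xs"
  have xs: "distinct xs" "set xs = S" using assms(1) by (simp_all add: xs_def)
  have K: "?K $$ (i, j) = 1 / real (gcd (xs ! i) (xs ! j))" if "i < ?n" "j < ?n" for i j
  proof -
    have "xs ! i \<in> S" "xs ! j \<in> S" using xs(2) that by auto
    hence "gcd (xs ! i) (xs ! j) \<in> S" using assms(3) unfolding gcd_closed_def by blast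
    have "?K $$ (i, j) = (\<Sum>z | z \<in> S \<and> z dvd gcd (xs ! i) (xs ! j).
                              divisor_sum_avoiding z (covered_set S z))"
      using divisor_mat_mult_transpose [OF xs(1) that] xs(2) by (simp del: gcd_greatest_iff)
    also have "\<dots> = 1 / real (gcd (xs ! i) (xs ! j))"
      using assms(1-3) \<open>gcd (xs ! i) (xs ! j) \<in> S\<close> by (rule sum_divisor_sum_avoiding_covered_set)
    finally show ?thesis .
  qed
  have lcm_entry: "real (lcm (xs ! i) (xs ! j)) =
      real (xs ! i) * (1 / real (gcd (xs ! i) (xs ! j))) * real (xs ! j)" if "i < ?n" "j < ?n" for i j
  proof -
    have "gcd (xs ! i) (xs ! j) > 0" using xs(2) that assms(2) by auto
    moreover have "real (xs ! i) * real (xs ! j) =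
        real (gcd (xs ! i) (xs ! j)) * real (lcm (xs ! i) (xs ! j))"
      by (metis of_nat_mult prod_gcd_lcm_nat)
    ultimately show ?thesis by (simp add: field_simps)
  qed
  have "?K \<in> carrier_mat ?n ?n" unfolding carrier_mat_def by (simp add: divisor_mat_def)
  hence DK: "D * ?K = mat ?n ?n (\<lambda>(i, j). real (xs ! i) * ?K $$ (i, j))"
    unfolding D_def by (rule mat_diag_mult_left)
  hence "D * ?K * D = mat ?n ?n (\<lambda>(i, j). (D * ?K) $$ (i, j) * real (xs ! j))"
    unfolding D_def by (intro mat_diag_mult_right) simp
  also have "\<dots> = mat ?n ?n (\<lambda>(i, j). real (lcm (xs ! i) (xs ! j)))"
    by (rule cong_mat) (simp_all add: DK K lcm_entry)
  also have "\<dots> = lcm_matrix S" by (simp add: lcm_matrix_def xs_def Let_def)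
  finally show ?thesis by simp
qed

lemma invertible_mat_if_det_nonzero:
  fixes A :: "'a :: field mat"
  assumes "A \<in> carrier_mat n n" "det A \<noteq> 0"
  shows "invertible_mat A"
proof -
  obtain B where "B * A = 1\<^sub>m n" "A * B = 1\<^sub>m n" "B \<in> carrier_mat n n"
    using det_non_zero_imp_unit [OF assms, of "()"] unfolding Units_def ring_mat_def by auto
  thus ?thesis using assms(1)
    unfolding invertible_mat_def inverts_mat_def square_mat.simps by auto
qed

lemma det_lcm_matrix:
  assumes "finite S" "\<forall>x\<in>S. x > 0" "gcd_closed S"
  shows "det (lcm_matrix S) =
           (\<Prod>x\<in>S. real x)\<^sup>2 * (\<Prod>x\<in>S. divisor_sum_avoiding x (covered_set S x))"
proof -
  define xs where "xs = sorted_list_of_set S"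
  let ?n = "length xs"
  let ?D = "mat_diag ?n (\<lambda>i. real (xs ! i))"
  let ?F = "divisor_mat xs (\<lambda>z. divisor_sum_avoiding z (covered_set S z))"
  let ?E = "divisor_mat xs (\<lambda>_. 1)"
  have xs: "sorted_wrt (<) xs" "distinct xs" "set xs = S" "0 \<notin> set xs"
    using assms(1,2) by (auto simp: xs_def sorted_list_of_set.strict_sorted_key_list_of_set)
  have cD: "?D \<in> carrier_mat ?n ?n" and cF: "?F \<in> carrier_mat ?n ?n"
    and cE: "transpose_mat ?E \<in> carrier_mat ?n ?n"
    by (simp_all add: divisor_mat_carrier)
  have cK: "?F * transpose_mat ?E \<in> carrier_mat ?n ?n" using cF cE by (rule mult_carrier_mat)
  have "det (transpose_mat ?E) = 1"
    using det_transpose [OF divisor_mat_carrier] det_divisor_mat [OF xs(1,4)]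
    by (simp add: map_replicate_const)
  hence "det (?D * (?F * transpose_mat ?E) * ?D) = det ?D * det ?F * det ?D"
    by (simp add: det_mult [OF mult_carrier_mat [OF cD cK] cD] det_mult [OF cD cK]
        det_mult [OF cF cE])
  also have "\<dots> = (\<Prod>x\<in>S. real x)\<^sup>2 * (\<Prod>x\<in>S. divisor_sum_avoiding x (covered_set S x))"
    using prod.distinct_set_conv_list [OF xs(2), of real]
      prod.distinct_set_conv_list [OF xs(2), of "\<lambda>x. divisor_sum_avoiding x (covered_set S x)"]
    unfolding xs(3) by (simp add: det_mat_diag_nth det_divisor_mat [OF xs(1,4)] power2_eq_square)
  finally show ?thesis
    using lcm_matrix_factorization [OF assms] by (simp add: xs_def)
qed

theorem corollary4p3:
  fixes S :: "nat set"
  assumes "finite S"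
    and "\<forall>x\<in>S. x > 0"
    and "gcd_closed S"
    and "\<forall>x\<in>S. generates_double_chain S x"
  shows "invertible_mat (lcm_matrix S)"
proof (rule invertible_mat_if_det_nonzero)
  show "lcm_matrix S \<in> carrier_mat (card S) (card S)"
    by (simp add: lcm_matrix_def Let_def)
  have "\<forall>x\<in>S. divisor_sum_avoiding x (covered_set S x) \<noteq> 0"
    using divisor_sum_avoiding_covered_set_nonzero assms(1,2,4) by blast
  moreover have "0 \<notin> S" using assms(2) by blast
  ultimately show "det (lcm_matrix S) \<noteq> 0"
    using assms(1) by (simp add: det_lcm_matrix [OF assms(1-3)] prod_zero_iff)
qed

end
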